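(* Let $\gamma>0$, $\rho<0$, $C>0$, and let $F$ be a distribution function whose tail quantile function $Q(t)=F^{\leftarrow}(1-1/t)$ satisfies the von Mises condition: there are $A>0$, $t_0>0$ and a function $b$ with $Q(t)=A t^{\gamma}\exp\int_{t_0}^t \frac{b(u)}{u}\,du$ for $t\ge t_0$, and $\bar b(t):=\sup_{x\ge t}|b(x)|\le C t^{\rho}$ for all $t>0$. For integers $k\ge1$ and $\delta\in(0,1)$ define $V(k,\delta)$ as the $(1-\delta/2)$-quantile of $|Z_k-1|$ where $Z_k\sim\mathrm{Gamma}(\text{shape }k,\text{ rate }k)$, $\tilde V(k,\delta)=\sqrt{2\log(2/\delta)/k}+\log(2/\delta)/k$, $R(k,\delta)=\sqrt{3\log(1/\delta)/k}+3\log(1/\delta)/k$, and $$B(k,n,\delta)=\bigl(1+\tilde V(1,\delta/2)\bigr)\,\bar b\Bigl(\frac{n}{(k+1)\bigl(1+R(1,\delta/2)\bigr)}\Bigr).$$ Let $c_1\in(0,1]$ and $c_2\in(0,2]$ be constants such that $V(k,\delta)\ge c_1\bigl(\sqrt{(0\vee\log(c_2/\delta))/k}+\log(c_2/\delta)/k\bigr)$ for all $k\ge1$, $\delta\in(0,1)$. Let $n\ge1$, let $\mathcal K=\{k_1<k_2<\dots<k_M\}\subset\{1,\dots,n\}$, and let $\delta\in(0,1)$ with $\delta\le c_2^2/4$. Assume (i) $B(k_1,n,\delta)\le\gamma V(k_1,\delta)$ and $B(k_M,n,\delta)>\gamma V(k_M,\delta)$; (ii) there is $\beta>1$ with $k_{m+1}/k_m\le\beta$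 for all $m<M$. Define $k^*(\delta,n)=\max\{k\in\mathcal K: B(k,n,\delta)\le\gamma V(k,\delta)\}$ and $$C_2(\rho)=\Bigl(\frac{4}{21}\Bigr)^2\Bigl(\frac{c_1}{\sqrt2\,C}\Bigr)^{2/(1-2\rho)}.$$ Then, provided $n$ is large enough that $n/2\ge \beta^{-1}\Bigl(\frac{C_2(\rho)\gamma^{2/(1-2\rho)}}{\log(4/\delta)}n^{-2\rho/(1-2\rho)}-1\Bigr)$, $$k^*(\delta,n)\ge\beta^{-1}\Bigl(\frac{C_2(\rho)\,\gamma^{2/(1-2\rho)}}{\log(4/\delta)}\,n^{-2\rho/(1-2\rho)}-1\Bigr).$$
   Context: Here $F^{\leftarrow}$ denotes the generalized inverse of $F$. The functions $V$ and $B$ are the variance and bias terms of a non-asymptotic error bound for the Hill estimator $\hat\gamma(k)=\frac1k\sum_{i=1}^k\log(X_{(i)}/X_{(k+1)})$ (with $X_{(1)}\ge\dots\ge X_{(n)}$ the order statistics of an i.i.d. sample from $F$), specialized to the von Mises setting; $k^*(\delta,n)$ is the corresponding "oracle" extreme sample size on the grid $\mathcal K$. Assumption (i) is the "sufficiently wide grid" condition and (ii) the "fine enough grid" condition. *)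

theory Defs
  imports "HOL-Probability.Probability"
begin

definition is_cdf :: "(real \<Rightarrow> real) \<Rightarrow> bool" where
  "is_cdf F \<longleftrightarrow> mono F \<and> (\<forall>x. continuous (at_right x) F)
     \<and> (F \<longlongrightarrow> 0) at_bot \<and> (F \<longlongrightarrow> 1) at_top"

definition geninv :: "(real \<Rightarrow> real) \<Rightarrow> real \<Rightarrow> real" where
  "geninv F p = Inf {x. F x \<ge> p}"

definition tailQ :: "(real \<Rightarrow> real) \<Rightarrow> real \<Rightarrow> real" where
  "tailQ F t = geninv F (1 - 1 / t)"

definition von_mises :: "(real \<Rightarrow> real) \<Rightarrow> real \<Rightarrow> (real \<Rightarrow> real) \<Rightarrow> bool" where
  "von_mises F \<gamma> b \<longleftrightarrow> (\<exists>A t0. A > 0 \<and> t0 > 0 \<and>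
     (\<forall>t\<ge>t0. set_integrable lborel {t0..t} (\<lambda>u. b u / u) \<and>
        tailQ F t = A * t powr \<gamma> * exp (LBINT u=t0..t. b u / u)))"

definition bsup :: "(real \<Rightarrow> real) \<Rightarrow> real \<Rightarrow> ereal" where
  "bsup b t = (SUP x\<in>{t..}. ereal \<bar>b x\<bar>)"

definition bbar :: "(real \<Rightarrow> real) \<Rightarrow> real \<Rightarrow> real" where
  "bbar b t = real_of_ereal (bsup b t)"

text \<open>Gamma(shape k, rate k) law (k a positive integer: Erlang).\<close>
definition gamma_kk :: "nat \<Rightarrow> real measure" where
  "gamma_kk k = density lborel (\<lambda>x. ennreal (erlang_density (k - 1) (real k) x))"

definition Vq :: "nat \<Rightarrow> real \<Rightarrow> real" where
  "Vq k \<delta> = Inf {x. measure (gamma_kk k) {z. \<bar>z - 1\<bar> \<le> x} \<ge> 1 - \<delta> / 2}"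

definition Vt :: "nat \<Rightarrow> real \<Rightarrow> real" where
  "Vt k \<delta> = sqrt (2 * ln (2 / \<delta>) / real k) + ln (2 / \<delta>) / real k"

definition Rk :: "nat \<Rightarrow> real \<Rightarrow> real" where
  "Rk k \<delta> = sqrt (3 * ln (1 / \<delta>) / real k) + 3 * ln (1 / \<delta>) / real k"

definition Bk :: "(real \<Rightarrow> real) \<Rightarrow> nat \<Rightarrow> nat \<Rightarrow> real \<Rightarrow> real" where
  "Bk b k n \<delta> = (1 + Vt 1 (\<delta> / 2)) *
      bbar b (real n / (real (k + 1) * (1 + Rk 1 (\<delta> / 2))))"

definition kstar :: "(real \<Rightarrow> real) \<Rightarrow> real \<Rightarrow> nat set \<Rightarrow> nat \<Rightarrow> real \<Rightarrow> nat" where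
  "kstar b \<gamma> K n \<delta> = Max {k\<in>K. Bk b k n \<delta> \<le> \<gamma> * Vq k \<delta>}"

definition C2 :: "real \<Rightarrow> real \<Rightarrow> real \<Rightarrow> real" where
  "C2 c1 C \<rho> = (4 / 21)\<^sup>2 * (c1 / (sqrt 2 * C)) powr (2 / (1 - 2 * \<rho>))"

end

theory Submission
  imports Defs
begin

text \<open>Write \<open>L = log(4/\<delta>)\<close> and \<open>T\<close> for the threshold
  \<open>C\<^sub>2(\<rho>) \<gamma>\<^bsup>2/(1-2\<rho>)\<^esup> n\<^bsup>-2\<rho>/(1-2\<rho>)\<^esup> / L\<close>.
  Since \<open>1 + Vt(1,\<delta>/2) \<le> (21/4) L\<close> and \<open>1 + R(1,\<delta>/2) \<le> (21/4)\<^sup>2 L\<close>, the bound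
  \<open>bbar(t) \<le> C t\<^sup>\<rho>\<close> gives \<open>B(k) \<le> (21/4) L C (a/n)\<^bsup>-\<rho>\<^esup>\<close> with
  \<open>a = (21/4)\<^sup>2 (k+1) L\<close>, and \<open>k + 1 < T\<close> is exactly the balance condition
  \<open>a\<^bsup>1/2-\<rho>\<^esup> \<le> \<gamma> c\<^sub>1 n\<^bsup>-\<rho>\<^esup> / (\<surd>2 C)\<close>, under which
  \<open>B(k) \<le> \<gamma> c\<^sub>1 \<surd>(L/(2k)) \<le> \<gamma> V(k)\<close>, the last step because \<open>\<delta> \<le> c\<^sub>2\<^sup>2/4\<close>.
  So every grid point violating \<open>B \<le> \<gamma> V\<close> is at least \<open>T - 1\<close>; the successor of
  \<open>k\<^sup>*\<close> in the grid is such a point and is at most \<open>\<beta> k\<^sup>*\<close>.\<close>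

lemma bsup_nonneg: "0 \<le> bsup b t"
proof -
  have "ereal \<bar>b t\<bar> \<le> bsup b t"
    unfolding bsup_def by (rule SUP_upper) auto
  then show ?thesis
    by (rule order_trans[rotated]) simp
qed

lemma bbar_nonneg: "0 \<le> bbar b t"
  unfolding bbar_def by (rule real_of_ereal_pos[OF bsup_nonneg])

lemma bbar_le:
  assumes "bsup b t \<le> ereal y"
  shows "bbar b t \<le> y"
  using assms bsup_nonneg[of b t] unfolding bbar_def by (cases "bsup b t") auto

lemma ln_four_div_ge_one:
  fixes \<delta> :: real
  assumes "0 < \<delta>" "\<delta> < 1"
  shows "1 \<le> ln (4 / \<delta>)"
proof -
  have "exp 1 \<le> (4::real)"
    using exp_le by simp
  also have "\<dots> \<le> 4 / \<delta>"
    using assms by (simp add: field_simps)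
  finally show ?thesis
    using assms by (simp add: ln_ge_iff)
qed

lemma sqrt_le_self:
  fixes x :: real
  assumes "1 \<le> x"
  shows "sqrt x \<le> x"
  using assms real_sqrt_le_mono[of x "x\<^sup>2"] by (simp add: power2_eq_square)

lemma one_plus_Vt_le:
  fixes \<delta> :: real
  assumes "0 < \<delta>" "\<delta> < 1"
  shows "1 + Vt 1 (\<delta> / 2) \<le> 4 * ln (4 / \<delta>)"
proof -
  define L where "L = ln (4 / \<delta>)"
  have "1 \<le> L"
    unfolding L_def using assms by (rule ln_four_div_ge_one)
  then have "sqrt (2 * L) \<le> 2 * L"
    by (intro sqrt_le_self) simp
  moreover have "Vt 1 (\<delta> / 2) = sqrt (2 * L) + L"
    unfolding Vt_def L_def by simp
  ultimately show ?thesis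
    using \<open>1 \<le> L\<close> unfolding L_def by linarith
qed

lemma one_plus_Rk_le:
  fixes \<delta> :: real
  assumes "0 < \<delta>" "\<delta> < 1"
  shows "1 + Rk 1 (\<delta> / 2) \<le> 7 * ln (4 / \<delta>)"
proof -
  define L where "L = ln (4 / \<delta>)"
  define L' where "L' = ln (2 / \<delta>)"
  have "1 \<le> L"
    unfolding L_def using assms by (rule ln_four_div_ge_one)
  have "0 \<le> L'" "L' \<le> L"
    unfolding L'_def L_def using assms by (auto intro!: divide_right_mono)
  then have "sqrt (3 * L') \<le> 3 * L"
    using sqrt_le_self[of "3 * L"] \<open>1 \<le> L\<close> real_sqrt_le_mono[of "3 * L'" "3 * L"] by linarith
  moreover have "Rk 1 (\<delta> / 2) = sqrt (3 * L') + 3 * L'"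
    unfolding Rk_def L'_def by simp
  ultimately show ?thesis
    using \<open>1 \<le> L\<close> \<open>L' \<le> L\<close> unfolding L_def by linarith
qed

lemma ln_four_div_le_two_ln:
  fixes c2 \<delta> :: real
  assumes "0 < c2" "0 < \<delta>" "\<delta> \<le> c2\<^sup>2 / 4"
  shows "ln (4 / \<delta>) \<le> 2 * ln (c2 / \<delta>)"
proof -
  have "4 / \<delta> \<le> (c2 / \<delta>)\<^sup>2"
    using assms by (simp add: power_divide field_simps power2_eq_square)
  then have "ln (4 / \<delta>) \<le> ln ((c2 / \<delta>)\<^sup>2)"
    using assms by simp
  also have "\<dots> = 2 * ln (c2 / \<delta>)"
    using assms by (simp add: ln_realpow)
  finally show ?thesis .
qed

lemma Vq_ge_sqrt_ln:
  fixes c1 c2 \<delta> :: real and k :: nat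
  assumes hV: "\<forall>k\<ge>1. \<forall>d. 0 < d \<and> d < 1 \<longrightarrow>
           Vq k d \<ge> c1 * (sqrt (max 0 (ln (c2 / d)) / real k) + ln (c2 / d) / real k)"
    and "0 < c1" "0 < c2" "k \<ge> 1" "0 < \<delta>" "\<delta> < 1" "\<delta> \<le> c2\<^sup>2 / 4"
  shows "c1 * sqrt (ln (4 / \<delta>) / (2 * real k)) \<le> Vq k \<delta>"
proof -
  define a where "a = ln (c2 / \<delta>)"
  have "ln (4 / \<delta>) \<le> 2 * a"
    unfolding a_def using assms by (intro ln_four_div_le_two_ln)
  moreover have "1 \<le> ln (4 / \<delta>)"
    using assms by (intro ln_four_div_ge_one)
  ultimately have "sqrt (ln (4 / \<delta>) / (2 * real k)) \<le> sqrt (max 0 a / real k) + a / real k"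
    using \<open>k \<ge> 1\<close> by (intro add_increasing2) (simp_all add: divide_simps)
  then have "c1 * sqrt (ln (4 / \<delta>) / (2 * real k))
      \<le> c1 * (sqrt (max 0 a / real k) + a / real k)"
    using \<open>0 < c1\<close> by simp
  also have "\<dots> \<le> Vq k \<delta>"
    using hV assms unfolding a_def by simp
  finally show ?thesis .
qed

lemma powr_div_le_div_sqrt:
  fixes a n M p :: real
  assumes "0 < a" "0 < n" "0 < M" "0 \<le> p"
    and "a \<le> (M * n powr p) powr (2 / (1 + 2 * p))"
  shows "(a / n) powr p \<le> M / sqrt a"
proof -
  have "a powr (p + 1 / 2) \<le> ((M * n powr p) powr (2 / (1 + 2 * p))) powr (p + 1 / 2)"
    using assms by (intro powr_mono2) auto
  also have "\<dots> = M * n powr p"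
    using assms by (simp add: powr_powr field_simps)
  finally have "a powr p * sqrt a \<le> M * n powr p"
    using assms by (simp add: powr_half_sqrt[symmetric] powr_add)
  then show ?thesis
    using assms by (simp add: powr_divide field_simps)
qed

lemma C2_threshold_eq:
  fixes c1 C \<rho> \<gamma> n :: real
  assumes "0 < c1" "0 < C" "\<rho> < 0" "0 < \<gamma>" "0 < n"
  shows "C2 c1 C \<rho> * \<gamma> powr (2 / (1 - 2 * \<rho>)) * n powr (- 2 * \<rho> / (1 - 2 * \<rho>))
       = (4 / 21)\<^sup>2 * (\<gamma> * (c1 / (sqrt 2 * C)) * n powr (- \<rho>)) powr (2 / (1 + 2 * (- \<rho>)))"
proof -
  define e where "e = 2 / (1 - 2 * \<rho>)"
  have "(\<gamma> * (c1 / (sqrt 2 * C)) * n powr (- \<rho>)) powr e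
      = \<gamma> powr e * (c1 / (sqrt 2 * C)) powr e * (n powr (- \<rho>)) powr e"
    using assms by (simp only: powr_mult mult_nonneg_nonneg less_imp_le powr_ge_zero
        divide_nonneg_pos real_sqrt_gt_zero mult_pos_pos zero_less_numeral)
  also have "(n powr (- \<rho>)) powr e = n powr (- 2 * \<rho> / (1 - 2 * \<rho>))"
    unfolding e_def powr_powr by (simp add: mult.commute)
  finally show ?thesis
    unfolding C2_def e_def by (simp add: ac_simps)
qed

lemma Bk_le_powr:
  fixes \<rho> C \<delta> :: real and b :: "real \<Rightarrow> real" and n k :: nat
  assumes "\<rho> < 0" "0 < C" and hb: "\<forall>t>0. bsup b t \<le> ereal (C * t powr \<rho>)"
    and "n \<ge> 1" "0 < \<delta>" "\<delta> < 1"
  shows "Bk b k n \<delta> \<le> (21 / 4) * ln (4 / \<delta>)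
           * (C * ((real k + 1) * (21 / 4)\<^sup>2 * ln (4 / \<delta>) / real n) powr (- \<rho>))"
proof -
  define L where "L = ln (4 / \<delta>)"
  define V1 where "V1 = Vt 1 (\<delta> / 2)"
  define R1 where "R1 = Rk 1 (\<delta> / 2)"
  define \<alpha> :: real where "\<alpha> = 21 / 4"
  define m where "m = (real k + 1) * (1 + R1)"
  define a where "a = (real k + 1) * \<alpha>\<^sup>2 * L"
  have "1 \<le> L"
    unfolding L_def using assms by (intro ln_four_div_ge_one)
  have V1: "1 + V1 \<le> \<alpha> * L"
    using one_plus_Vt_le[of \<delta>] assms \<open>1 \<le> L\<close> unfolding V1_def L_def \<alpha>_def by linarith
  have R1: "1 + R1 \<le> \<alpha>\<^sup>2 * L"
    using one_plus_Rk_le[of \<delta>] assms \<open>1 \<le> L\<close> unfolding R1_def L_def \<alpha>_def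
    by (simp add: power2_eq_square)
  have "0 \<le> V1" "0 \<le> R1"
    unfolding V1_def R1_def Vt_def Rk_def using assms by auto
  then have "0 < m" "m \<le> a"
    using R1 unfolding m_def a_def by (auto intro: mult_left_mono)
  have "bbar b (real n / m) \<le> C * (real n / m) powr \<rho>"
    using hb \<open>0 < m\<close> assms by (intro bbar_le) simp
  also have "(real n / m) powr \<rho> = (m / real n) powr (- \<rho>)"
    using \<open>0 < m\<close> assms by (simp add: powr_divide powr_minus_divide)
  also have "\<dots> \<le> (a / real n) powr (- \<rho>)"
    using \<open>0 < m\<close> \<open>m \<le> a\<close> assms by (intro powr_mono2 divide_right_mono) auto
  finally have bbar: "bbar b (real n / m) \<le> C * (a / real n) powr (- \<rho>)"
    using \<open>0 < C\<close> by simp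
  have "Bk b k n \<delta> = (1 + V1) * bbar b (real n / m)"
    unfolding Bk_def V1_def R1_def m_def by (simp add: add.commute)
  also have "\<dots> \<le> \<alpha> * L * (C * (a / real n) powr (- \<rho>))"
    using V1 bbar bbar_nonneg \<open>0 \<le> V1\<close> \<open>0 < C\<close> by (intro mult_mono) auto
  finally show ?thesis
    unfolding \<alpha>_def a_def L_def .
qed

lemma Bk_le_gamma_Vq:
  fixes \<gamma> \<rho> C c1 c2 \<delta> :: real and b :: "real \<Rightarrow> real" and n k :: nat
  assumes "0 < \<gamma>" "\<rho> < 0" "0 < C"
    and hb: "\<forall>t>0. bsup b t \<le> ereal (C * t powr \<rho>)"
    and "0 < c1" "0 < c2"
    and hV: "\<forall>k\<ge>1. \<forall>d. 0 < d \<and> d < 1 \<longrightarrow>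
           Vq k d \<ge> c1 * (sqrt (max 0 (ln (c2 / d)) / real k) + ln (c2 / d) / real k)"
    and "n \<ge> 1" "k \<ge> 1"
    and "0 < \<delta>" "\<delta> < 1" "\<delta> \<le> c2\<^sup>2 / 4"
    and below: "real k + 1 < C2 c1 C \<rho> * \<gamma> powr (2 / (1 - 2 * \<rho>)) / ln (4 / \<delta>)
                 * real n powr (- 2 * \<rho> / (1 - 2 * \<rho>))"
  shows "Bk b k n \<delta> \<le> \<gamma> * Vq k \<delta>"
proof -
  define L where "L = ln (4 / \<delta>)"
  define \<alpha> :: real where "\<alpha> = 21 / 4"
  define M where "M = \<gamma> * (c1 / (sqrt 2 * C))"
  define a where "a = (real k + 1) * \<alpha>\<^sup>2 * L"
  have "1 \<le> L"
    unfolding L_def using assms by (intro ln_four_div_ge_one)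
  have "0 < \<alpha>" "0 < a" "0 < M"
    unfolding a_def M_def \<alpha>_def using assms \<open>1 \<le> L\<close> by auto
  have "a \<le> (M * real n powr (- \<rho>)) powr (2 / (1 + 2 * (- \<rho>)))"
    using below C2_threshold_eq[of c1 C \<rho> \<gamma> "real n"] assms \<open>1 \<le> L\<close>
    unfolding a_def M_def L_def \<alpha>_def by (simp add: field_simps)
  then have balance: "(a / real n) powr (- \<rho>) \<le> M / sqrt a"
    using \<open>0 < a\<close> \<open>0 < M\<close> assms by (intro powr_div_le_div_sqrt) auto
  have "Bk b k n \<delta> \<le> \<alpha> * L * (C * (a / real n) powr (- \<rho>))"
    using Bk_le_powr[OF \<open>\<rho> < 0\<close> \<open>0 < C\<close> hb] assms unfolding \<alpha>_def a_def L_def by simp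
  also have "\<dots> \<le> \<alpha> * L * (C * (M / sqrt a))"
    using balance assms \<open>1 \<le> L\<close> \<open>0 < \<alpha>\<close> by (intro mult_left_mono) auto
  also have "\<dots> = \<gamma> * (c1 * sqrt (L / (2 * (real k + 1))))"
  proof -
    have "sqrt a = \<alpha> * (sqrt (real k + 1) * sqrt L)"
      unfolding a_def using \<open>1 \<le> L\<close> \<open>0 < \<alpha>\<close> by (simp add: real_sqrt_mult)
    moreover have "sqrt (L / (2 * (real k + 1))) = sqrt L / (sqrt 2 * sqrt (real k + 1))"
      by (simp only: real_sqrt_divide real_sqrt_mult)
    moreover have "L = sqrt L * sqrt L"
      using \<open>1 \<le> L\<close> by simp
    ultimately show ?thesis
      using \<open>0 < C\<close> \<open>1 \<le> L\<close> \<open>0 < \<alpha>\<close> unfolding M_def by (simp add: field_simps)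
  qed
  also have "\<dots> \<le> \<gamma> * (c1 * sqrt (L / (2 * real k)))"
    using assms \<open>1 \<le> L\<close> by (intro mult_left_mono real_sqrt_le_mono divide_left_mono) auto
  also have "\<dots> \<le> \<gamma> * Vq k \<delta>"
    using Vq_ge_sqrt_ln[OF hV] assms unfolding L_def by (intro mult_left_mono) auto
  finally show ?thesis .
qed

lemma Max_good_ge_div_ratio:
  fixes K :: "nat set" and P :: "nat \<Rightarrow> bool" and \<beta> \<tau> :: real
  assumes "finite K" "K \<noteq> {}" "0 \<notin> K" "0 < \<beta>"
    and "P (Min K)" "\<not> P (Max K)"
    and ratio: "\<forall>k\<in>K. k \<noteq> Max K \<longrightarrow> real (Min {j\<in>K. j > k}) / real k \<le> \<beta>"
    and bad_large: "\<forall>k\<in>K. \<not> P k \<longrightarrow> \<tau> \<le> real k"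
  shows "\<tau> / \<beta> \<le> real (Max {k\<in>K. P k})"
proof -
  define S where "S = {k\<in>K. P k}"
  define k where "k = Max S"
  have "finite S" "Min K \<in> S"
    unfolding S_def using assms by auto
  then have "k \<in> S"
    unfolding k_def by (intro Max_in) auto
  then have "k \<in> K" "k \<noteq> Max K" "0 < k"
    unfolding S_def using assms by (auto intro: gr0I)
  then have "k < Max K"
    using Max_ge[OF \<open>finite K\<close> \<open>k \<in> K\<close>] by linarith
  define k' where "k' = Min {j\<in>K. j > k}"
  have "Max K \<in> {j\<in>K. j > k}"
    using Max_in[OF \<open>finite K\<close> \<open>K \<noteq> {}\<close>] \<open>k < Max K\<close> by simp
  then have "k' \<in> {j\<in>K. j > k}"
    unfolding k'_def using \<open>finite K\<close> by (intro Min_in) auto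
  then have "k' \<in> K" "\<not> P k'"
    using Max_ge[OF \<open>finite S\<close>, of k'] unfolding k_def S_def by auto
  then have "\<tau> \<le> real k'"
    using bad_large by blast
  also have "real k' \<le> \<beta> * real k"
  proof -
    have "real k' / real k \<le> \<beta>"
      using ratio \<open>k \<in> K\<close> \<open>k \<noteq> Max K\<close> unfolding k'_def by blast
    then show ?thesis
      using \<open>0 < k\<close> by (simp add: pos_divide_le_eq)
  qed
  finally show ?thesis
    using \<open>0 < \<beta>\<close> unfolding k_def S_def by (simp add: pos_divide_le_eq mult.commute)
qed

theorem proposition4:
  fixes \<gamma> \<rho> C c1 c2 \<delta> \<beta> :: real and F b :: "real \<Rightarrow> real"
    and n :: nat and K :: "nat set"
  assumes "\<gamma> > 0" "\<rho> < 0" "C > 0"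
    and "is_cdf F" and "von_mises F \<gamma> b"
    and "\<forall>t>0. bsup b t \<le> ereal (C * t powr \<rho>)"
    and "0 < c1" "c1 \<le> 1" "0 < c2" "c2 \<le> 2"
    and "\<forall>k\<ge>1. \<forall>d. 0 < d \<and> d < 1 \<longrightarrow>
           Vq k d \<ge> c1 * (sqrt (max 0 (ln (c2 / d)) / real k) + ln (c2 / d) / real k)"
    and "n \<ge> 1" and "K \<subseteq> {1..n}" and "K \<noteq> {}"
    and "0 < \<delta>" "\<delta> < 1" "\<delta> \<le> c2\<^sup>2 / 4"
    and "Bk b (Min K) n \<delta> \<le> \<gamma> * Vq (Min K) \<delta>"
    and "Bk b (Max K) n \<delta> > \<gamma> * Vq (Max K) \<delta>"
    and "\<beta> > 1"
    and "\<forall>k\<in>K. k \<noteq> Max K \<longrightarrow> real (Min {j\<in>K. j > k}) / real k \<le> \<beta>"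
    and "real n / 2 \<ge> (1 / \<beta>) * (C2 c1 C \<rho> * \<gamma> powr (2 / (1 - 2 * \<rho>)) / ln (4 / \<delta>)
                 * real n powr (- 2 * \<rho> / (1 - 2 * \<rho>)) - 1)"
  shows "real (kstar b \<gamma> K n \<delta>) \<ge> (1 / \<beta>) * (C2 c1 C \<rho> * \<gamma> powr (2 / (1 - 2 * \<rho>))
                 / ln (4 / \<delta>) * real n powr (- 2 * \<rho> / (1 - 2 * \<rho>)) - 1)"
proof -
  define T where "T = C2 c1 C \<rho> * \<gamma> powr (2 / (1 - 2 * \<rho>)) / ln (4 / \<delta>)
                 * real n powr (- 2 * \<rho> / (1 - 2 * \<rho>))"
  have "finite K" "0 \<notin> K"
    using \<open>K \<subseteq> {1..n}\<close> finite_subset by auto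
  have "\<forall>k\<in>K. \<not> Bk b k n \<delta> \<le> \<gamma> * Vq k \<delta> \<longrightarrow> T - 1 \<le> real k"
  proof (intro ballI impI)
    fix k assume "k \<in> K" and bad: "\<not> Bk b k n \<delta> \<le> \<gamma> * Vq k \<delta>"
    then have "k \<ge> 1"
      using \<open>K \<subseteq> {1..n}\<close> by auto
    show "T - 1 \<le> real k"
    proof (rule ccontr)
      assume "\<not> T - 1 \<le> real k"
      then have "Bk b k n \<delta> \<le> \<gamma> * Vq k \<delta>"
        using Bk_le_gamma_Vq[OF assms(1-3,6,7,9,11,12) \<open>k \<ge> 1\<close> assms(15-17)]
        unfolding T_def by simp
      with bad show False ..
    qed
  qed
  then have "(T - 1) / \<beta> \<le> real (kstar b \<gamma> K n \<delta>)"
    unfolding kstar_def using assms(14,18-21) \<open>finite K\<close> \<open>0 \<notin> K\<close>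
    by (intro Max_good_ge_div_ratio) auto
  then show ?thesis
    unfolding T_def by simp
qed

end
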